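(* Fix $\alpha\in(0,1)$ and consider the Monte Carlo permutation test described in the context, and suppose $\mathbb{P}(q(\mathcal{X})<1)>0$. Then: (i) If $B\ge 2$ satisfies $k_B-k_{B-1}=1$ and $k_{B+1}-k_B=0$, then $\mathrm{Pow}(B-1)<\mathrm{Pow}(B)$ and $\mathrm{Pow}(B+1)<\mathrm{Pow}(B)$, i.e. $\mathrm{Pow}(B)$ is a strict local maximum of $B\mapsto\mathrm{Pow}(B)$. (ii) There exist infinitely many integers $B\ge 2$ with $k_{B-1}<k_B=k_{B+1}$; consequently the function $B\mapsto \mathrm{Pow}(B)$ has infinitely many strict local maxima.
   Context: Let $\mathcal{X}$ be a random observed dataset taking values in a space on which a finite group $\mathcal{G}$ acts (write $\mathcal{X}^\pi$ for the action of $\pi\in\mathcal{G}$; the identity of $\mathcal{G}$ fixes every dataset), and let $T$ be a real-valued test statistic. Fix $\alpha\in(0,1)$. For an integer $B\ge1$, let $\pi_1,\dots,\pi_B$ be i.i.d. uniform on $\mathcal{G}$, independent of $\mathcal{X}$. The Monte Carlo permutation $p$-value is $p_B(\mathcal{X})=\bigl(1+\sum_{i=1}^B \mathbf{1}\{T(\mathcal{X}^{\pi_i})\ge T(\mathcal{X})\}\bigr)/(B+1)$, and the test rejects iff $p_B(\mathcal{X})\le\alpha$. Define $q(\mathcal{X})=\mathbb{P}(T(\mathcal{X}^\pi)\ge T(\mathcal{X})\mid \mathcal{X})$ for $\pi$ uniform on $\mathcal{G}$ independent of $\mathcal{X}$ (so $q(\mathcal{X})\in[1/|\mathcal{G}|,1]$),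 $R_B=\sum_{i=1}^B \mathbf{1}\{T(\mathcal{X}^{\pi_i})\ge T(\mathcal{X})\}$ (so $R_B\mid\mathcal{X}\sim\mathrm{Binomial}(B,q(\mathcal{X}))$), and the critical count $k_B=\lfloor (B+1)\alpha\rfloor-1$ for integers $B\ge 0$. Then $\{p_B(\mathcal{X})\le\alpha\}=\{R_B\le k_B\}$. The conditional rejection probability is $\phi_B(\mathcal{X})=\mathbb{P}(R_B\le k_B\mid\mathcal{X})$ and the (unconditional) power is $\mathrm{Pow}(B)=\mathbb{E}[\phi_B(\mathcal{X})]=\mathbb{E}\bigl[\mathbb{P}(\mathrm{Binomial}(B,q(\mathcal{X}))\le k_B\mid\mathcal{X})\bigr]$, for $B\ge1$. *)

theory Defs
  imports "HOL-Probability.Probability" "HOL-Algebra.Group"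
begin

definition qval :: "('g, 'b) monoid_scheme \<Rightarrow> ('g \<Rightarrow> 'x \<Rightarrow> 'x) \<Rightarrow> ('x \<Rightarrow> real) \<Rightarrow> 'x \<Rightarrow> real" where
  "qval G act T x = real (card {g \<in> carrier G. T (act g x) \<ge> T x}) / real (card (carrier G))"

definition kcrit :: "real \<Rightarrow> nat \<Rightarrow> int" where
  "kcrit \<alpha> B = \<lfloor>(real B + 1) * \<alpha>\<rfloor> - 1"

definition rejprob :: "real \<Rightarrow> nat \<Rightarrow> real \<Rightarrow> real" where
  "rejprob \<alpha> B p = measure_pmf.prob (binomial_pmf B p) {j. int j \<le> kcrit \<alpha> B}"

definition Pow :: "'w measure \<Rightarrow> ('w \<Rightarrow> 'x) \<Rightarrow> ('g, 'b) monoid_scheme \<Rightarrow> ('g \<Rightarrow> 'x \<Rightarrow> 'x)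
    \<Rightarrow> ('x \<Rightarrow> real) \<Rightarrow> real \<Rightarrow> nat \<Rightarrow> real" where
  "Pow M X G act T \<alpha> B = (\<integral>w. rejprob \<alpha> B (qval G act T (X w)) \<partial>M)"

end

theory Submission
  imports Defs
begin

text \<open>Write F(B, q) for the probability that Binomial(B, q) is at most k(B). Pascal's rule for the
  binomial distribution shows that F(B, q) - F(B - 1, q) = (1 - q) P(Binomial(B - 1, q) = k(B)) when
  k(B) = k(B - 1) + 1, and F(B, q) - F(B + 1, q) = q P(Binomial(B, q) = k(B)) when k(B + 1) = k(B).
  Both differences are nonnegative, and positive for 0 < q < 1. Since q(X) \<ge> 1/|G| > 0 and q(X) < 1 with positive probability, integrating
  gives the strict local maximum. As k(B) = \<lfloor>(B + 1)\<alpha>\<rfloor> - 1 grows by 0 or 1 per step, with average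
  slope \<alpha> \<in> (0, 1), both kinds of step occur infinitely often, hence so does a jump followed by a
  flat step.\<close>

lemma pmf_binomial_pmf_Suc_Suc:
  assumes "p \<in> {0..1}"
  shows "pmf (binomial_pmf (Suc n) p) (Suc k) =
           p * pmf (binomial_pmf n p) k + (1 - p) * pmf (binomial_pmf n p) (Suc k)"
proof -
  have "(\<lambda>x. indicator {Suc k} (Suc x) :: real) = indicator {k}"
    by (auto simp: indicator_def)
  then show ?thesis
    using assms by (simp add: binomial_pmf_Suc[OF assms] pmf_bind measure_pmf_single del: pmf_binomial)
qed

lemma prob_lessThan_Suc:
  "measure_pmf.prob M {..<Suc m} = measure_pmf.prob M {..<m} + pmf M m"
  by (simp add: measure_measure_pmf_finite)

lemma prob_binomial_pmf_lessThan_Suc: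
  assumes "p \<in> {0..1}"
  shows "measure_pmf.prob (binomial_pmf (Suc n) p) {..<Suc m} =
           p * measure_pmf.prob (binomial_pmf n p) {..<m}
           + (1 - p) * measure_pmf.prob (binomial_pmf n p) {..<Suc m}"
proof (induction m)
  case 0
  then show ?case using assms by (simp add: measure_measure_pmf_finite)
next
  case (Suc m)
  then show ?case
    using assms
    by (simp only: prob_lessThan_Suc[of _ "Suc m"] prob_lessThan_Suc[of "binomial_pmf n p" m]
        pmf_binomial_pmf_Suc_Suc) (simp add: algebra_simps del: pmf_binomial)
qed

lemma kcrit_ge_minus_one:
  assumes "0 \<le> \<alpha>"
  shows "-1 \<le> kcrit \<alpha> B"
proof -
  have "0 \<le> \<lfloor>(real B + 1) * \<alpha>\<rfloor>"
    using assms by simp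
  then show ?thesis
    unfolding kcrit_def by linarith
qed

lemma kcrit_less:
  assumes "\<alpha> < 1"
  shows "kcrit \<alpha> B < int B"
proof -
  have "\<lfloor>(real B + 1) * \<alpha>\<rfloor> \<le> int B"
    using assms by (simp add: floor_le_iff)
  then show ?thesis
    unfolding kcrit_def by linarith
qed

lemma kcrit_le_Suc: "0 \<le> \<alpha> \<Longrightarrow> kcrit \<alpha> B \<le> kcrit \<alpha> (Suc B)"
  unfolding kcrit_def by (intro diff_right_mono floor_mono mult_right_mono) simp_all

lemma kcrit_Suc_le: "\<alpha> \<le> 1 \<Longrightarrow> kcrit \<alpha> (Suc B) \<le> kcrit \<alpha> B + 1"
proof -
  assume "\<alpha> \<le> 1"
  then have "\<lfloor>(real B + 1) * \<alpha> + \<alpha>\<rfloor> \<le> \<lfloor>(real B + 1) * \<alpha> + 1\<rfloor>"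
    by (intro floor_mono) simp
  then show ?thesis
    unfolding kcrit_def by (simp add: algebra_simps)
qed

lemma kcrit_bounds:
  fixes \<alpha> :: real and B :: nat
  shows "(real B + 1) * \<alpha> - 2 < kcrit \<alpha> B" "kcrit \<alpha> B \<le> (real B + 1) * \<alpha> - 1"
  unfolding kcrit_def by linarith+

lemma le_if_no_ascent:
  fixes f :: "nat \<Rightarrow> 'a::linorder"
  assumes "m \<le> n" "\<And>i. m \<le> i \<Longrightarrow> i < n \<Longrightarrow> \<not> f i < f (Suc i)"
  shows "f n \<le> f m"
  using assms by (induction n rule: dec_induct) (auto intro: order.trans simp: not_less)

lemma add_le_if_ascending:
  fixes f :: "nat \<Rightarrow> int"
  assumes "m \<le> n" "\<And>i. m \<le> i \<Longrightarrow> i < n \<Longrightarrow> f i < f (Suc i)"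
  shows "f m + int (n - m) \<le> f n"
  using assms(1)
proof (induction n rule: dec_induct)
  case base
  then show ?case by simp
next
  case (step k)
  have "f k < f (Suc k)" "int (Suc k - m) = int (k - m) + 1"
    using assms(2) step by (simp_all add: Suc_diff_le)
  with step.IH show ?case by linarith
qed

lemma INFM_nat_falling_edge:
  assumes "\<exists>\<^sub>\<infinity>n. P n" "\<exists>\<^sub>\<infinity>n. \<not> P n"
  shows "\<exists>\<^sub>\<infinity>n. P n \<and> \<not> P (Suc n)"
  unfolding INFM_nat_le
proof
  fix m
  have edge: "\<exists>n\<ge>a. P n \<and> \<not> P (Suc n)" if "a \<le> b" "P a" "\<not> P b" for a b
    using that by (induction b rule: dec_induct) (auto intro: le_SucI)
  obtain a where "a \<ge> m" "P a" using assms(1) by (auto simp: INFM_nat_le)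
  moreover obtain b where "b \<ge> a" "\<not> P b" using assms(2) by (auto simp: INFM_nat_le)
  ultimately show "\<exists>n\<ge>m. P n \<and> \<not> P (Suc n)"
    using edge[of a b] order.trans by blast
qed

lemma INFM_kcrit_ascent:
  assumes "0 < \<alpha>"
  shows "\<exists>\<^sub>\<infinity>n. kcrit \<alpha> n < kcrit \<alpha> (Suc n)"
  unfolding INFM_nat_le
proof (rule allI, rule ccontr)
  fix m
  assume "\<not> (\<exists>n\<ge>m. kcrit \<alpha> n < kcrit \<alpha> (Suc n))"
  then have bounded: "kcrit \<alpha> n \<le> kcrit \<alpha> m" if "m \<le> n" for n
    using that le_if_no_ascent[of m n "kcrit \<alpha>"] by auto
  obtain t where t: "kcrit \<alpha> m + 2 < real t * \<alpha>"
    using ex_less_of_nat_mult[OF assms] by blast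
  have "real t * \<alpha> \<le> (real (m + t) + 1) * \<alpha>"
    using assms by (intro mult_right_mono) auto
  then show False
    using t bounded[of "m + t"] kcrit_bounds(1)[where B = "m + t" and \<alpha> = \<alpha>] by linarith
qed

lemma INFM_kcrit_flat:
  assumes "\<alpha> < 1"
  shows "\<exists>\<^sub>\<infinity>n. \<not> kcrit \<alpha> n < kcrit \<alpha> (Suc n)"
  unfolding INFM_nat_le
proof (rule allI, rule ccontr)
  fix m
  assume "\<not> (\<exists>n\<ge>m. \<not> kcrit \<alpha> n < kcrit \<alpha> (Suc n))"
  moreover obtain t where t: "1 < real t * (1 - \<alpha>)"
    using ex_less_of_nat_mult[where x = "1 - \<alpha>" and y = 1] assms by auto
  ultimately have "kcrit \<alpha> m + int t \<le> kcrit \<alpha> (m + t)"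
    using add_le_if_ascending[of m "m + t" "kcrit \<alpha>"] by auto
  moreover have "(real (m + t) + 1) * \<alpha> = (real m + 1) * \<alpha> + real t * \<alpha>"
    by (simp add: algebra_simps)
  ultimately show False
    using t kcrit_bounds(1)[where B = m and \<alpha> = \<alpha>]
      kcrit_bounds(2)[where B = "m + t" and \<alpha> = \<alpha>]
    by (simp add: algebra_simps)
qed

lemma infinite_kcrit_plateau_starts:
  assumes "0 < \<alpha>" "\<alpha> < 1"
  shows "infinite {B. B \<ge> 2 \<and> kcrit \<alpha> (B - 1) < kcrit \<alpha> B \<and> kcrit \<alpha> B = kcrit \<alpha> (B + 1)}"
    (is "infinite ?S")
  unfolding infinite_nat_iff_unbounded_le
proof
  fix m
  obtain n where "n \<ge> m + 1" "kcrit \<alpha> n < kcrit \<alpha> (Suc n)"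
    "\<not> kcrit \<alpha> (Suc n) < kcrit \<alpha> (Suc (Suc n))"
    using INFM_nat_falling_edge[OF INFM_kcrit_ascent[OF assms(1)] INFM_kcrit_flat[OF assms(2)]]
    unfolding INFM_nat_le by blast
  moreover have "kcrit \<alpha> (Suc n) \<le> kcrit \<alpha> (Suc (Suc n))"
    using assms(1) by (intro kcrit_le_Suc) simp
  ultimately show "\<exists>B\<ge>m. B \<in> ?S"
    by (intro exI[of _ "Suc n"]) auto
qed

lemma qval_bounds:
  assumes "group G" "finite (carrier G)" "act \<one>\<^bsub>G\<^esub> x = x"
  shows "0 < qval G act T x" "qval G act T x \<le> 1"
proof -
  let ?A = "{g \<in> carrier G. T (act g x) \<ge> T x}"
  have "\<one>\<^bsub>G\<^esub> \<in> ?A"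
    using assms(1,3) by (simp add: group.is_monoid monoid.one_closed)
  then have "0 < card ?A"
    using assms(2) by (auto simp: card_gt_0_iff)
  moreover have "card ?A \<le> card (carrier G)"
    using assms(2) by (intro card_mono) auto
  ultimately show "0 < qval G act T x" "qval G act T x \<le> 1"
    unfolding qval_def by (simp_all add: divide_le_eq_1)
qed

lemma borel_measurable_qval:
  assumes "finite (carrier G)" "(\<lambda>w. T (X w)) \<in> borel_measurable M"
    and "\<And>g. g \<in> carrier G \<Longrightarrow> (\<lambda>w. T (act g (X w))) \<in> borel_measurable M"
  shows "(\<lambda>w. qval G act T (X w)) \<in> borel_measurable M"
proof -
  have "qval G act T (X w) =
          (\<Sum>g\<in>carrier G. of_bool (T (act g (X w)) \<ge> T (X w))) / real (card (carrier G))" for w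
    using assms(1) by (simp add: qval_def Int_def)
  then show ?thesis
    unfolding of_bool_def
    by (simp only:) (intro borel_measurable_divide borel_measurable_sum borel_measurable_const
        measurable_If borel_measurable_le assms(2,3), auto)
qed

lemma rejprob_eq_prob_lessThan:
  assumes "-1 \<le> kcrit \<alpha> B"
  shows "rejprob \<alpha> B p = measure_pmf.prob (binomial_pmf B p) {..<nat (kcrit \<alpha> B + 1)}"
proof -
  have "{j. int j \<le> kcrit \<alpha> B} = {..<nat (kcrit \<alpha> B + 1)}"
    using assms by auto
  then show ?thesis
    unfolding rejprob_def by simp
qed

lemma borel_measurable_rejprob:
  assumes "0 \<le> \<alpha>" "q \<in> borel_measurable M" "\<And>w. q w \<in> {0..1}"
  shows "(\<lambda>w. rejprob \<alpha> B (q w)) \<in> borel_measurable M"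
proof -
  have "rejprob \<alpha> B (q w) =
          (\<Sum>j<nat (kcrit \<alpha> B + 1). real (B choose j) * q w ^ j * (1 - q w) ^ (B - j))" for w
    using assms(3)[of w] kcrit_ge_minus_one[OF assms(1)]
    by (simp add: rejprob_eq_prob_lessThan measure_measure_pmf_finite)
  moreover note [measurable] = assms(2)
  ultimately show ?thesis
    by (simp only:) measurable
qed

lemma rejprob_Suc_at_jump:
  assumes "0 \<le> \<alpha>" "kcrit \<alpha> (Suc n) = kcrit \<alpha> n + 1" "p \<in> {0..1}"
  shows "rejprob \<alpha> (Suc n) p =
           rejprob \<alpha> n p + (1 - p) * pmf (binomial_pmf n p) (nat (kcrit \<alpha> (Suc n)))"
proof -
  define m where "m = nat (kcrit \<alpha> (Suc n))"
  have "nat (kcrit \<alpha> n + 1) = m" "nat (kcrit \<alpha> (Suc n) + 1) = Suc m"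
    using assms(2) kcrit_ge_minus_one[OF assms(1), of n] by (simp_all add: m_def)
  then have "rejprob \<alpha> (Suc n) p =
      p * measure_pmf.prob (binomial_pmf n p) {..<m}
      + (1 - p) * measure_pmf.prob (binomial_pmf n p) {..<Suc m}"
    "rejprob \<alpha> n p = measure_pmf.prob (binomial_pmf n p) {..<m}"
    using assms(3) kcrit_ge_minus_one[OF assms(1)]
    by (simp_all add: rejprob_eq_prob_lessThan prob_binomial_pmf_lessThan_Suc)
  then show ?thesis
    by (simp add: prob_lessThan_Suc m_def algebra_simps del: pmf_binomial)
qed

lemma rejprob_Suc_on_plateau:
  assumes "0 \<le> kcrit \<alpha> n" "kcrit \<alpha> (Suc n) = kcrit \<alpha> n" "p \<in> {0..1}"
  shows "rejprob \<alpha> (Suc n) p = rejprob \<alpha> n p - p * pmf (binomial_pmf n p) (nat (kcrit \<alpha> n))"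
proof -
  define m where "m = nat (kcrit \<alpha> n)"
  have "nat (kcrit \<alpha> n + 1) = Suc m" "nat (kcrit \<alpha> (Suc n) + 1) = Suc m"
    using assms(1,2) by (simp_all add: m_def)
  then have "rejprob \<alpha> (Suc n) p =
      p * measure_pmf.prob (binomial_pmf n p) {..<m}
      + (1 - p) * measure_pmf.prob (binomial_pmf n p) {..<Suc m}"
    "rejprob \<alpha> n p = measure_pmf.prob (binomial_pmf n p) {..<Suc m}"
    using assms by (simp_all add: rejprob_eq_prob_lessThan prob_binomial_pmf_lessThan_Suc)
  then show ?thesis
    by (simp add: prob_lessThan_Suc m_def algebra_simps del: pmf_binomial)
qed

lemma integral_rejprob_less:
  assumes "prob_space M" "0 \<le> \<alpha>" "q \<in> borel_measurable M" "\<And>w. q w \<in> {0<..1}"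
    and "0 < measure M {w \<in> space M. q w < 1}"
    and "\<And>p. p \<in> {0<..1} \<Longrightarrow> rejprob \<alpha> B p \<le> rejprob \<alpha> B' p"
    and "\<And>p. p \<in> {0<..<1} \<Longrightarrow> rejprob \<alpha> B p < rejprob \<alpha> B' p"
  shows "(\<integral>w. rejprob \<alpha> B (q w) \<partial>M) < (\<integral>w. rejprob \<alpha> B' (q w) \<partial>M)"
proof -
  interpret prob_space M by fact
  have integrable: "integrable M (\<lambda>w. rejprob \<alpha> C (q w))" for C
  proof (rule integrable_const_bound[where B = 1])
    show "AE w in M. norm (rejprob \<alpha> C (q w)) \<le> 1"
      by (simp add: rejprob_def)
    have "q w \<in> {0..1}" for w
      using assms(4)[of w] by simp
    then show "(\<lambda>w. rejprob \<alpha> C (q w)) \<in> borel_measurable M"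
      by (intro borel_measurable_rejprob[OF assms(2,3)])
  qed
  have "emeasure M {w \<in> space M. q w < 1} \<noteq> 0"
    using assms(5) by (auto simp: measure_def)
  moreover have "rejprob \<alpha> B (q w) \<le> rejprob \<alpha> B' (q w)" for w
    using assms(4,6) by simp
  moreover have "rejprob \<alpha> B (q w) < rejprob \<alpha> B' (q w)" if "q w < 1" for w
    using assms(4,7) that by simp
  ultimately show ?thesis
    using assms(3) by (intro integral_less_AE[OF integrable integrable]) (auto simp: less_le)
qed

lemma Pow_strict_local_max:
  assumes "prob_space M" "group G" "finite (carrier G)" "\<And>x. act \<one>\<^bsub>G\<^esub> x = x"
    and "(\<lambda>w. T (X w)) \<in> borel_measurable M"
    and "\<And>g. g \<in> carrier G \<Longrightarrow> (\<lambda>w. T (act g (X w))) \<in> borel_measurable M"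
    and "0 \<le> \<alpha>" "\<alpha> < 1"
    and "0 < measure M {w \<in> space M. qval G act T (X w) < 1}"
    and ascent: "kcrit \<alpha> n < kcrit \<alpha> (Suc n)"
    and plateau: "kcrit \<alpha> (Suc (Suc n)) = kcrit \<alpha> (Suc n)"
  shows "Pow M X G act T \<alpha> n < Pow M X G act T \<alpha> (Suc n)"
    and "Pow M X G act T \<alpha> (Suc (Suc n)) < Pow M X G act T \<alpha> (Suc n)"
proof -
  have jump: "kcrit \<alpha> (Suc n) = kcrit \<alpha> n + 1"
    using ascent kcrit_Suc_le[of \<alpha> n] assms(8) by simp
  define m where "m = nat (kcrit \<alpha> (Suc n))"
  have "m \<le> n"
    using kcrit_less[OF assms(8), of "Suc n"] by (simp add: m_def)
  then have pmf_pos: "0 < pmf (binomial_pmf N p) m" if "p \<in> {0<..<1}" "n \<le> N" for N p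
    using that by simp
  have up: "rejprob \<alpha> (Suc n) p = rejprob \<alpha> n p + (1 - p) * pmf (binomial_pmf n p) m"
    if "p \<in> {0..1}" for p
    using rejprob_Suc_at_jump[OF assms(7) jump that] by (simp add: m_def)
  have down:
    "rejprob \<alpha> (Suc (Suc n)) p = rejprob \<alpha> (Suc n) p - p * pmf (binomial_pmf (Suc n) p) m"
    if "p \<in> {0..1}" for p
    using rejprob_Suc_on_plateau[OF _ plateau that] jump kcrit_ge_minus_one[OF assms(7), of n]
    by (simp add: m_def)
  have "qval G act T (X w) \<in> {0<..1}" for w
    using qval_bounds[where act = act and x = "X w", OF assms(2,3,4)] by simp
  note q = borel_measurable_qval[OF assms(3,5,6)] this
  show "Pow M X G act T \<alpha> n < Pow M X G act T \<alpha> (Suc n)"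
    unfolding Pow_def
    by (rule integral_rejprob_less[OF assms(1,7) q assms(9)])
      (auto simp: up simp del: pmf_binomial intro!: mult_pos_pos pmf_pos)
  show "Pow M X G act T \<alpha> (Suc (Suc n)) < Pow M X G act T \<alpha> (Suc n)"
    unfolding Pow_def
    by (rule integral_rejprob_less[OF assms(1,7) q assms(9)])
      (auto simp: down simp del: pmf_binomial intro!: mult_pos_pos pmf_pos)
qed

theorem theorem1:
  fixes M :: "'w measure" and X :: "'w \<Rightarrow> 'x" and G :: "('g, 'b) monoid_scheme"
    and act :: "'g \<Rightarrow> 'x \<Rightarrow> 'x" and T :: "'x \<Rightarrow> real" and \<alpha> :: real
  assumes "prob_space M"
    and "group G" and "finite (carrier G)"
    and "\<And>x. act \<one>\<^bsub>G\<^esub> x = x"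
    and "\<And>g h x. g \<in> carrier G \<Longrightarrow> h \<in> carrier G \<Longrightarrow> act (g \<otimes>\<^bsub>G\<^esub> h) x = act g (act h x)"
    and "(\<lambda>w. T (X w)) \<in> borel_measurable M"
    and "\<And>g. g \<in> carrier G \<Longrightarrow> (\<lambda>w. T (act g (X w))) \<in> borel_measurable M"
    and "0 < \<alpha>" and "\<alpha> < 1"
    and "measure M {w \<in> space M. qval G act T (X w) < 1} > 0"
  shows "(\<forall>B\<ge>2. kcrit \<alpha> B - kcrit \<alpha> (B - 1) = 1 \<and> kcrit \<alpha> (B + 1) - kcrit \<alpha> B = 0 \<longrightarrow>
            Pow M X G act T \<alpha> (B - 1) < Pow M X G act T \<alpha> B \<and>
            Pow M X G act T \<alpha> (B + 1) < Pow M X G act T \<alpha> B)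
       \<and> infinite {B. B \<ge> 2 \<and> kcrit \<alpha> (B - 1) < kcrit \<alpha> B \<and> kcrit \<alpha> B = kcrit \<alpha> (B + 1)}
       \<and> infinite {B. B \<ge> 2 \<and> Pow M X G act T \<alpha> (B - 1) < Pow M X G act T \<alpha> B \<and>
                          Pow M X G act T \<alpha> (B + 1) < Pow M X G act T \<alpha> B}"
proof -
  let ?Pow = "Pow M X G act T \<alpha>"
  have local_max: "?Pow (B - 1) < ?Pow B \<and> ?Pow (B + 1) < ?Pow B"
    if "B \<ge> 1" "kcrit \<alpha> (B - 1) < kcrit \<alpha> B" "kcrit \<alpha> (B + 1) = kcrit \<alpha> B" for B
  proof -
    obtain n where "B = Suc n"
      using \<open>B \<ge> 1\<close> by (cases B) auto
    then show ?thesis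
      using Pow_strict_local_max[OF assms(1-4,6,7) _ assms(9,10), of n] assms(8) that by simp
  qed
  then have "{B. B \<ge> 2 \<and> kcrit \<alpha> (B - 1) < kcrit \<alpha> B \<and> kcrit \<alpha> B = kcrit \<alpha> (B + 1)}
      \<subseteq> {B. B \<ge> 2 \<and> ?Pow (B - 1) < ?Pow B \<and> ?Pow (B + 1) < ?Pow B}"
    by auto
  moreover have "infinite {B. B \<ge> 2 \<and> kcrit \<alpha> (B - 1) < kcrit \<alpha> B \<and> kcrit \<alpha> B = kcrit \<alpha> (B + 1)}"
    by (rule infinite_kcrit_plateau_starts[OF assms(8,9)])
  ultimately show ?thesis
    using local_max infinite_super by auto
qed

end
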